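(* Suppose that a group $G$ acts geometrically on a CAT(0) space $X$ with fixed basepoint $x_0$ and $|\partial X|>2$. Assume that there exists a constant $M>0$ such that for any $\alpha,\beta\in\partial X$ with $\alpha\neq\beta$, there exist a sequence $\{g_i\}\subset G$ and a point $y_0\in X$ such that $d(y_0,g_ix_0)\to\infty$ as $i\to\infty$ and for every $i\in\mathbb{N}$, $$\operatorname{Im}\xi_{g_ix_0,\alpha}\cap B(y_0,M)\neq\emptyset\quad\text{and}\quad\operatorname{Im}\xi_{g_ix_0,\beta}\cap B(y_0,M)\neq\emptyset.$$ Then the boundary $\partial X$ is a scrambled set.
   Context: A geometric action is an action by isometries which is proper and cocompact. $\partial X$ is the visual boundary of $X$, on which $G$ acts by homeomorphisms. For $x\in X$ and $\alpha\in\partial X$, $\xi_{x,\alpha}$ denotes the unique geodesic ray with $\xi_{x,\alpha}(0)=x$ and $\xi_{x,\alpha}(\infty)=\alpha$; $B(y_0,M)$ is the closed ball. The metric on $\partial X$ is $d_{\partial X}(\alpha,\beta)=\sum_{i=1}^\infty\min\{d(\xi_{x_0,\alpha}(i),\xi_{x_0,\beta}(i)),\,2^{-i}\}$. $\partial X$ is a scrambled set if for all $\alpha\neq\beta$ in $\partial X$, $\limsup\{d_{\partial X}(g\alpha,g\beta)\mid g\in G\}>0$ and $\liminf\{d_{\partial X}(g\alpha,g\beta)\mid g\in G\}=0$, where limsup/liminf are taken as $g$ leaves every finite subset of $G$. *)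

theory Defs
  imports "HOL-Analysis.Analysis" "HOL-Algebra.Group_Action" "HOL-Library.Liminf_Limsup"
begin

text \<open>The metric space X is the whole type 'a (a metric_space).\<close>

definition geodesic_seg :: "(real \<Rightarrow> 'a::metric_space) \<Rightarrow> 'a \<Rightarrow> 'a \<Rightarrow> bool" where
  "geodesic_seg c p q \<longleftrightarrow> c 0 = p \<and> c (dist p q) = q \<and>
     (\<forall>s\<in>{0..dist p q}. \<forall>t\<in>{0..dist p q}. dist (c s) (c t) = \<bar>s - t\<bar>)"

definition geodesic_space :: "'a::metric_space itself \<Rightarrow> bool" where
  "geodesic_space _ \<longleftrightarrow> (\<forall>p q::'a. \<exists>c. geodesic_seg c p q)"

text \<open>CAT(0) inequality: for a geodesic triangle with vertices p, q, r and sides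
  c1 = [p,q], c2 = [q,r], and a Euclidean comparison triangle P, Q, R in the plane
  (complex numbers) with the same side lengths, the distance between a point of
  c1 and a point of c2 is at most that between the comparison points.
  (Pairs of points on other pairs of sides are covered by relabelling the triangle,
  pairs on the same side are trivial.)\<close>

definition CAT0 :: "'a::metric_space itself \<Rightarrow> bool" where
  "CAT0 T \<longleftrightarrow> geodesic_space T \<and>
    (\<forall>(p::'a) q r c1 c2 (P::complex) Q R.
       geodesic_seg c1 p q \<longrightarrow> geodesic_seg c2 q r \<longrightarrow>
       cmod (P - Q) = dist p q \<longrightarrow> cmod (Q - R) = dist q r \<longrightarrow> cmod (R - P) = dist r p \<longrightarrow>
       (\<forall>s\<in>{0..dist p q}. \<forall>t\<in>{0..dist q r}.
          dist (c1 s) (c2 t) \<le> cmod ((P + of_real s * sgn (Q - P)) - (Q + of_real t * sgn (R - Q)))))"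

definition proper_space :: "'a::metric_space itself \<Rightarrow> bool" where
  "proper_space _ \<longleftrightarrow> (\<forall>(x::'a) r. compact (cball x r))"

text \<open>A geodesic ray is parametrised on [0,\<infinity>); for definiteness it is extended
  constantly to negative times.\<close>

definition geodesic_ray :: "(real \<Rightarrow> 'a::metric_space) \<Rightarrow> bool" where
  "geodesic_ray c \<longleftrightarrow> (\<forall>s\<ge>0. \<forall>t\<ge>0. dist (c s) (c t) = \<bar>s - t\<bar>) \<and> (\<forall>t<0. c t = c 0)"

definition asymptotic :: "((real \<Rightarrow> 'a::metric_space) \<times> (real \<Rightarrow> 'a)) set" where
  "asymptotic = {(c, c'). geodesic_ray c \<and> geodesic_ray c' \<and>
                          (\<exists>B. \<forall>t\<ge>0. dist (c t) (c' t) \<le> B)}"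

definition visual_boundary :: "'a::metric_space itself \<Rightarrow> (real \<Rightarrow> 'a) set set" where
  "visual_boundary _ = {c. geodesic_ray c} // asymptotic"

text \<open>\<xi>_{x,\<alpha>}: the geodesic ray issuing from x in the class \<alpha>.\<close>
definition ray_to :: "'a::metric_space \<Rightarrow> (real \<Rightarrow> 'a) set \<Rightarrow> (real \<Rightarrow> 'a)" where
  "ray_to x \<alpha> = (THE c. c \<in> \<alpha> \<and> c 0 = x)"

definition boundary_act :: "('g \<Rightarrow> 'a \<Rightarrow> 'a) \<Rightarrow> 'g \<Rightarrow> (real \<Rightarrow> 'a) set \<Rightarrow> (real \<Rightarrow> 'a) set" where
  "boundary_act act g \<alpha> = (\<lambda>c. act g \<circ> c) ` \<alpha>"

definition boundary_dist :: "'a::metric_space \<Rightarrow> (real \<Rightarrow> 'a) set \<Rightarrow> (real \<Rightarrow> 'a) set \<Rightarrow> real" where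
  "boundary_dist x0 \<alpha> \<beta> =
     (\<Sum>i. min (dist (ray_to x0 \<alpha> (real (Suc i))) (ray_to x0 \<beta> (real (Suc i)))) ((1/2) ^ Suc i))"

definition isometric_action :: "('g, 'b) monoid_scheme \<Rightarrow> ('g \<Rightarrow> 'a::metric_space \<Rightarrow> 'a) \<Rightarrow> bool" where
  "isometric_action G act \<longleftrightarrow> group_action G UNIV act \<and>
     (\<forall>g\<in>carrier G. \<forall>x y. dist (act g x) (act g y) = dist x y)"

definition proper_action :: "('g, 'b) monoid_scheme \<Rightarrow> ('g \<Rightarrow> 'a::metric_space \<Rightarrow> 'a) \<Rightarrow> bool" where
  "proper_action G act \<longleftrightarrow>
     (\<forall>K. compact K \<longrightarrow> finite {g \<in> carrier G. act g ` K \<inter> K \<noteq> {}})"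

definition cocompact_action :: "('g, 'b) monoid_scheme \<Rightarrow> ('g \<Rightarrow> 'a::metric_space \<Rightarrow> 'a) \<Rightarrow> bool" where
  "cocompact_action G act \<longleftrightarrow> (\<exists>K. compact K \<and> (\<Union>g\<in>carrier G. act g ` K) = UNIV)"

definition geometric_action :: "('g, 'b) monoid_scheme \<Rightarrow> ('g \<Rightarrow> 'a::metric_space \<Rightarrow> 'a) \<Rightarrow> bool" where
  "geometric_action G act \<longleftrightarrow> isometric_action G act \<and> proper_action G act \<and> cocompact_action G act"

text \<open>Limits as g leaves every finite subset of G: the filter cofinite restricted to carrier G.\<close>
definition leaving_finite :: "('g, 'b) monoid_scheme \<Rightarrow> 'g filter" where
  "leaving_finite G = inf cofinite (principal (carrier G))"

definition scrambled_boundary ::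
  "('g, 'b) monoid_scheme \<Rightarrow> ('g \<Rightarrow> 'a::metric_space \<Rightarrow> 'a) \<Rightarrow> 'a \<Rightarrow> bool" where
  "scrambled_boundary G act x0 \<longleftrightarrow>
     (\<forall>\<alpha>\<in>visual_boundary TYPE('a). \<forall>\<beta>\<in>visual_boundary TYPE('a). \<alpha> \<noteq> \<beta> \<longrightarrow>
        Limsup (leaving_finite G)
          (\<lambda>g. ereal (boundary_dist x0 (boundary_act act g \<alpha>) (boundary_act act g \<beta>))) > 0 \<and>
        Liminf (leaving_finite G)
          (\<lambda>g. ereal (boundary_dist x0 (boundary_act act g \<alpha>) (boundary_act act g \<beta>))) = 0)"

end

theory Submission
  imports Defs
begin

text \<open>
  In a CAT(0) space the distance between two geodesic rays from a common point p is a convex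
  function of time, so their gap grows at most linearly; and the boundary distance of g\<alpha> and
  g\<beta> seen from x0 is the boundary distance of \<alpha> and \<beta> seen from the orbit point g^-1 x0.

  Liminf: the rays from g_i x0 to \<alpha> and \<beta> both pass through the ball B(y0, M) at a time
  t_i \<ge> d(y0, g_i x0) - M \<rightarrow> \<infinity>, where their gap is at most 4M; by convexity the gap is at most
  4M s / t_i at every time s \<le> t_i, so the boundary distances seen from g_i x0 tend to 0.

  Limsup: suppose the boundary distance seen from an orbit point tends to 0 as the orbit point
  leaves every bounded set. By cocompactness every point lies within D of the orbit of x0, so for
  each K the rays from any point far from x0 have gap at most 1 + 2D at time K. Walking along the
  ray from x0 to \<alpha> in steps of length K, the ray to \<beta> drifts away by at most 1 + 2D per step;
  by convexity the gap of the rays from x0 at time t is then at most t (1 + 2D) / K for every K.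
  So the rays from x0 to \<alpha> and \<beta> coincide and \<alpha> = \<beta>.
\<close>

section \<open>Geodesic segments and rays\<close>

lemma geodesic_seg_dist:
  assumes "geodesic_seg c p q" "0 \<le> s" "s \<le> dist p q" "0 \<le> t" "t \<le> dist p q"
  shows "dist (c s) (c t) = \<bar>s - t\<bar>"
  using assms unfolding geodesic_seg_def by auto

lemma geodesic_seg_reverse:
  assumes "geodesic_seg c p q"
  shows "geodesic_seg (\<lambda>s. c (dist p q - s)) q p"
  unfolding geodesic_seg_def
proof (intro conjI ballI)
  fix s t assume "s \<in> {0..dist q p}" "t \<in> {0..dist q p}"
  then show "dist (c (dist p q - s)) (c (dist p q - t)) = \<bar>s - t\<bar>"
    using geodesic_seg_dist[OF assms, of "dist p q - s" "dist p q - t"] by (simp add: dist_commute)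
qed (use assms in \<open>auto simp: geodesic_seg_def dist_commute\<close>)

lemma geodesic_seg_initial_part:
  assumes "geodesic_seg c p q" "0 \<le> s" "s \<le> dist p q"
  shows "geodesic_seg c p (c s)"
proof -
  have "c 0 = p" using assms(1) unfolding geodesic_seg_def by blast
  then have "dist p (c s) = s"
    using geodesic_seg_dist[OF assms(1), of 0 s] assms(2,3) by simp
  then show ?thesis using assms unfolding geodesic_seg_def by force
qed

lemma geodesic_ray_dist:
  assumes "geodesic_ray c" "0 \<le> s" "0 \<le> t"
  shows "dist (c s) (c t) = \<bar>s - t\<bar>"
  using assms unfolding geodesic_ray_def by blast

lemma geodesic_ray_geodesic_seg:
  assumes "geodesic_ray c" "0 \<le> T"
  shows "geodesic_seg c (c 0) (c T)"
  using geodesic_ray_dist[OF assms(1), of 0 T] geodesic_ray_dist[OF assms(1)] assms(2)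
  unfolding geodesic_seg_def by simp

lemma geodesic_ray_dist_approx:
  assumes "geodesic_ray c" "0 \<le> a"
  shows "\<bar>dist x (c a) - a\<bar> \<le> dist x (c 0)"
  using dist_triangle[of x "c a" "c 0"] dist_triangle2[of "c 0" "c a" x]
    geodesic_ray_dist[OF assms(1), of 0 a] assms(2) by (auto simp: dist_commute abs_le_iff)

lemma filterlim_dist_geodesic_ray:
  assumes c: "geodesic_ray c"
  shows "filterlim (\<lambda>n. dist x (c (real n))) at_top sequentially"
  unfolding filterlim_at_top
proof
  fix Z
  have "eventually (\<lambda>n. Z + dist x (c 0) \<le> real n) sequentially"
    using filterlim_real_sequentially unfolding filterlim_at_top by blast
  then show "eventually (\<lambda>n. Z \<le> dist x (c (real n))) sequentially"
  proof (rule eventually_mono)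
    fix n assume "Z + dist x (c 0) \<le> real n"
    then show "Z \<le> dist x (c (real n))"
      using geodesic_ray_dist_approx[OF c, of "real n" x] by (simp add: abs_le_iff)
  qed
qed

lemma geodesic_ray_of_limit:
  fixes x :: "'a::metric_space"
  assumes seg: "\<And>n. geodesic_seg (\<sigma> n) x (q n)"
    and len: "filterlim (\<lambda>n. dist x (q n)) at_top sequentially"
    and lim: "\<And>t. 0 \<le> t \<Longrightarrow> (\<lambda>n. \<sigma> n t) \<longlonglongrightarrow> r t"
    and neg: "\<And>t. t < 0 \<Longrightarrow> r t = r 0"
  shows "geodesic_ray r" "r 0 = x"
proof -
  show "r 0 = x"
    using lim[of 0] seg unfolding geodesic_seg_def by (simp add: LIMSEQ_const_iff)
  have "dist (r s) (r t) = \<bar>s - t\<bar>" if "0 \<le> s" "0 \<le> t" for s t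
  proof -
    have "eventually (\<lambda>n. s + t \<le> dist x (q n)) sequentially"
      using len unfolding filterlim_at_top by blast
    then have "eventually (\<lambda>n. dist (\<sigma> n s) (\<sigma> n t) = \<bar>s - t\<bar>) sequentially"
      by (rule eventually_mono) (use that geodesic_seg_dist[OF seg] in auto)
    then have "(\<lambda>n. dist (\<sigma> n s) (\<sigma> n t)) \<longlonglongrightarrow> \<bar>s - t\<bar>" by (rule tendsto_eventually)
    then show ?thesis using tendsto_dist[OF lim lim] that LIMSEQ_unique by blast
  qed
  then show "geodesic_ray r" unfolding geodesic_ray_def using neg by blast
qed

lemma proper_space_convergent:
  fixes X :: "nat \<Rightarrow> 'a::metric_space"
  assumes "proper_space TYPE('a)" "Cauchy X"
  shows "convergent X"
proof -
  obtain e a where sub: "range X \<subseteq> cball a e"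
    using bounded_subset_cball cauchy_imp_bounded[OF assms(2)] by blast
  have "complete (cball a e)"
    using assms(1) unfolding proper_space_def by (blast intro: compact_imp_complete)
  then show ?thesis using sub assms(2) unfolding complete_def convergent_def by blast
qed

definition ray_shift :: "real \<Rightarrow> (real \<Rightarrow> 'a) \<Rightarrow> real \<Rightarrow> 'a" where
  "ray_shift a c = (\<lambda>t. c (a + max 0 t))"

lemma ray_shift_apply: "0 \<le> t \<Longrightarrow> ray_shift a c t = c (a + t)"
  unfolding ray_shift_def by simp

lemma asymptotic_ray_shift:
  assumes "geodesic_ray c" "0 \<le> a"
  shows "(c, ray_shift a c) \<in> asymptotic"
proof -
  have "geodesic_ray (ray_shift a c)"
    unfolding geodesic_ray_def ray_shift_def using geodesic_ray_dist[OF assms(1)] assms(2) by auto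
  moreover have "\<forall>t\<ge>0. dist (c t) (ray_shift a c t) \<le> a"
    using geodesic_ray_dist[OF assms(1)] assms(2) unfolding ray_shift_def by auto
  ultimately show ?thesis unfolding asymptotic_def using assms(1) by auto
qed

lemma equiv_asymptotic: "equiv {c. geodesic_ray (c :: real \<Rightarrow> 'a::metric_space)} asymptotic"
proof (rule equivI)
  show "trans (asymptotic :: ((real \<Rightarrow> 'a) \<times> (real \<Rightarrow> 'a)) set)"
  proof (rule transI)
    fix x y z :: "real \<Rightarrow> 'a" assume "(x, y) \<in> asymptotic" "(y, z) \<in> asymptotic"
    then obtain B1 B2 where "geodesic_ray x" "geodesic_ray z"
      "\<And>t. t \<ge> 0 \<Longrightarrow> dist (x t) (y t) \<le> B1" "\<And>t. t \<ge> 0 \<Longrightarrow> dist (y t) (z t) \<le> B2"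
      unfolding asymptotic_def by auto
    moreover have "dist (x t) (z t) \<le> dist (x t) (y t) + dist (y t) (z t)" for t
      by (simp add: dist_triangle)
    ultimately have "\<forall>t\<ge>0. dist (x t) (z t) \<le> B1 + B2" by (smt (verit))
    then show "(x, z) \<in> asymptotic" unfolding asymptotic_def using \<open>geodesic_ray x\<close> \<open>geodesic_ray z\<close> by blast
  qed
qed (auto simp: asymptotic_def refl_on_def sym_on_def dist_commute)

section \<open>The visual boundary and its metric\<close>

lemma visual_boundaryE:
  fixes \<alpha> :: "(real \<Rightarrow> 'a::metric_space) set"
  assumes "\<alpha> \<in> visual_boundary TYPE('a)"
  obtains c where "geodesic_ray c" "\<alpha> = asymptotic `` {c}"
  using assms unfolding visual_boundary_def by (auto elim!: quotientE)

lemma asymptotic_if_in_visual_boundary: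
  fixes \<alpha> :: "(real \<Rightarrow> 'a::metric_space) set"
  assumes "\<alpha> \<in> visual_boundary TYPE('a)" "c \<in> \<alpha>" "c' \<in> \<alpha>"
  shows "(c, c') \<in> asymptotic"
  using assms quotient_eq_iff[OF equiv_asymptotic, of \<alpha> \<alpha> c c']
  unfolding visual_boundary_def by blast

lemma visual_boundary_asymptotic_closed:
  fixes \<alpha> :: "(real \<Rightarrow> 'a::metric_space) set"
  assumes "\<alpha> \<in> visual_boundary TYPE('a)" "c \<in> \<alpha>" "(c, c') \<in> asymptotic"
  shows "c' \<in> \<alpha>"
proof -
  obtain a where a: "\<alpha> = asymptotic `` {a}" using assms(1) by (rule visual_boundaryE)
  then have "(a, c) \<in> asymptotic" using assms(2) by simp
  with assms(3) have "(a, c') \<in> asymptotic" using equiv_asymptotic unfolding equiv_def by (meson transE)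
  then show ?thesis using a by simp
qed

lemma visual_boundary_eqI:
  fixes \<alpha> :: "(real \<Rightarrow> 'a::metric_space) set"
  assumes "\<alpha> \<in> visual_boundary TYPE('a)" "\<beta> \<in> visual_boundary TYPE('a)" "c \<in> \<alpha>" "c \<in> \<beta>"
  shows "\<alpha> = \<beta>"
  using quotient_disj[OF equiv_asymptotic] assms unfolding visual_boundary_def by blast

definition ray_gap :: "'a::metric_space \<Rightarrow> (real \<Rightarrow> 'a) set \<Rightarrow> (real \<Rightarrow> 'a) set \<Rightarrow> real \<Rightarrow> real" where
  "ray_gap p \<alpha> \<beta> t = dist (ray_to p \<alpha> t) (ray_to p \<beta> t)"

lemma boundary_dist_summable:
  "summable (\<lambda>i. min (ray_gap p \<alpha> \<beta> (real (Suc i))) ((1/2::real) ^ Suc i))"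
  by (rule summable_comparison_test'[of "\<lambda>i. (1/2::real) ^ Suc i"]) (auto simp: ray_gap_def)

lemma boundary_dist_ray_gap:
  "boundary_dist p \<alpha> \<beta> = (\<Sum>i. min (ray_gap p \<alpha> \<beta> (real (Suc i))) ((1/2) ^ Suc i))"
  unfolding boundary_dist_def ray_gap_def ..

lemma boundary_dist_nonneg: "0 \<le> boundary_dist p \<alpha> \<beta>"
  unfolding boundary_dist_ray_gap by (rule suminf_nonneg[OF boundary_dist_summable]) (simp add: ray_gap_def)

lemma min_ray_gap_le_boundary_dist:
  "min (ray_gap p \<alpha> \<beta> (real (Suc i))) ((1/2) ^ Suc i) \<le> boundary_dist p \<alpha> \<beta>"
  using sum_le_suminf[OF boundary_dist_summable, of "{i}"]
  unfolding boundary_dist_ray_gap by (simp add: ray_gap_def)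

lemma boundary_dist_le_partial_sum:
  "boundary_dist p \<alpha> \<beta> \<le> (\<Sum>i<N. ray_gap p \<alpha> \<beta> (real (Suc i))) + (1/2) ^ N"
proof -
  let ?f = "\<lambda>i. min (ray_gap p \<alpha> \<beta> (real (Suc i))) ((1/2::real) ^ Suc i)"
  have "summable (\<lambda>i. (1/2::real) ^ Suc i)" by simp
  then have "summable (\<lambda>n. (1/2::real) ^ Suc (n + N))"
    using summable_ignore_initial_segment by fastforce
  then have tail: "(\<Sum>n. ?f (n + N)) \<le> (\<Sum>n. (1/2) ^ Suc (n + N))"
    by (intro suminf_le summable_ignore_initial_segment[OF boundary_dist_summable])
      (auto simp del: power_Suc)
  have "boundary_dist p \<alpha> \<beta> = (\<Sum>n. ?f (n + N)) + (\<Sum>i<N. ?f i)"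
    unfolding boundary_dist_ray_gap by (rule suminf_split_initial_segment[OF boundary_dist_summable])
  also have "(\<Sum>i<N. ?f i) \<le> (\<Sum>i<N. ray_gap p \<alpha> \<beta> (real (Suc i)))"
    by (intro sum_mono) simp
  also note tail
  also have "(\<Sum>n. (1/2::real) ^ Suc (n + N)) = (1/2) ^ N"
    using suminf_mult[OF summable_geometric[of "1/2::real"], of "(1/2) ^ Suc N"]
      suminf_geometric[of "1/2::real"]
    by (simp add: power_add mult_ac)
  finally show ?thesis by simp
qed

lemma isometric_action_dist:
  "isometric_action G act \<Longrightarrow> g \<in> carrier G \<Longrightarrow> dist (act g x) (act g y) = dist x y"
  unfolding isometric_action_def by blast

lemma isometric_action_inv_cancel:
  assumes "group G" "isometric_action G act" "g \<in> carrier G"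
  shows "act (inv\<^bsub>G\<^esub> g) (act g x) = x" "act g (act (inv\<^bsub>G\<^esub> g) x) = x"
proof -
  have ga: "group_action G UNIV act" using assms(2) unfolding isometric_action_def by blast
  show "act (inv\<^bsub>G\<^esub> g) (act g x) = x" using group_action.orbit_sym_aux[OF ga assms(3)] by simp
  show "act g (act (inv\<^bsub>G\<^esub> g) x) = x"
    using group_action.orbit_sym_aux[OF ga group.inv_closed[OF assms(1,3)]] group.inv_inv[OF assms(1,3)]
    by simp
qed

lemma eventually_leaving_finite_beyond:
  fixes \<phi> :: "'g \<Rightarrow> real" and G :: "('g, 'b) monoid_scheme"
  assumes "eventually P (leaving_finite G)"
  shows "\<exists>R. \<forall>g\<in>carrier G. R < \<phi> g \<longrightarrow> P g"
proof -
  define S where "S = {g. \<not> (g \<in> carrier G \<longrightarrow> P g)}"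
  have "finite S"
    using assms unfolding S_def leaving_finite_def eventually_inf_principal eventually_cofinite .
  then have "\<forall>g\<in>carrier G. Max (insert 0 (\<phi> ` S)) < \<phi> g \<longrightarrow> P g"
    unfolding S_def by (auto dest: Max_ge[of _ "\<phi> _", rotated])
  then show ?thesis by blast
qed

lemma filterlim_leaving_finite:
  fixes \<phi> :: "'g \<Rightarrow> real" and G :: "('g, 'b) monoid_scheme"
  assumes "\<And>i. h i \<in> carrier G" and "filterlim (\<lambda>i. \<phi> (h i)) at_top sequentially"
  shows "filterlim h (leaving_finite G) sequentially"
  unfolding filterlim_def le_filter_def eventually_filtermap
proof (intro allI impI)
  fix P assume "eventually P (leaving_finite G)"
  then obtain R where "\<forall>g\<in>carrier G. R < \<phi> g \<longrightarrow> P g" using eventually_leaving_finite_beyond by blast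
  moreover have "eventually (\<lambda>i. R < \<phi> (h i)) sequentially"
    using assms(2) unfolding filterlim_at_top_dense by blast
  ultimately show "eventually (\<lambda>i. P (h i)) sequentially"
    using assms(1) by (auto elim: eventually_mono)
qed

lemma Liminf_le_if_tendsto_along:
  fixes f :: "'a \<Rightarrow> 'b::{complete_linorder, linorder_topology}"
  assumes "filterlim h F sequentially" and "(\<lambda>i. f (h i)) \<longlonglongrightarrow> c"
  shows "Liminf F f \<le> c"
proof -
  have "Liminf F f \<le> Liminf (filtermap h sequentially) f"
    using assms(1) unfolding Liminf_def filterlim_def le_filter_def
    by (intro SUP_subset_mono) auto
  also have "\<dots> \<le> Liminf sequentially (\<lambda>i. f (h i))" by (rule Liminf_filtermap_le)
  also have "\<dots> = c" using assms(2) by (intro lim_imp_Liminf) simp_all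
  finally show ?thesis .
qed

lemma cocompact_action_orbit_net:
  assumes "isometric_action G act" "cocompact_action G act"
  shows "\<exists>D. \<forall>p. \<exists>g\<in>carrier G. dist p (act g x0) \<le> D"
proof -
  obtain K where K: "compact K" "(\<Union>g\<in>carrier G. act g ` K) = UNIV"
    using assms(2) unfolding cocompact_action_def by blast
  obtain D where D: "\<forall>y\<in>K. dist x0 y \<le> D" using bounded_any_center compact_imp_bounded[OF K(1)] by blast
  have "\<exists>g\<in>carrier G. dist p (act g x0) \<le> D" for p
  proof -
    obtain g k where "g \<in> carrier G" "k \<in> K" "p = act g k" using K(2) by blast
    then show ?thesis using isometric_action_dist[OF assms(1)] D by (metis dist_commute)
  qed
  then show ?thesis by blast
qed

lemma comparison_triangle_exists:
  fixes A B C :: real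
  assumes "0 \<le> A" "0 \<le> B" "0 \<le> C" "C \<le> A + B" "A \<le> B + C" "B \<le> A + C"
  shows "\<exists>R::complex. cmod R = A \<and> cmod (R - complex_of_real B) = C"
proof (cases "B = 0")
  case True
  then show ?thesis using assms by (intro exI[of _ "complex_of_real A"]) auto
next
  case False
  then have B: "B > 0" using assms by auto
  \<comment> \<open>By the law of cosines, x is the real part of the third vertex R.\<close>
  define x where "x = (A\<^sup>2 + B\<^sup>2 - C\<^sup>2) / (2 * B)"
  have "(A - B)\<^sup>2 \<le> C\<^sup>2" using assms by (intro abs_le_square_iff[THEN iffD1]) (auto simp: abs_le_iff)
  then have "x \<le> A" unfolding x_def using B by (simp add: divide_le_eq power2_eq_square algebra_simps)
  moreover have "C\<^sup>2 \<le> (A + B)\<^sup>2" using assms by (intro power_mono) auto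
  then have "-A \<le> x" unfolding x_def using B by (simp add: le_divide_eq power2_eq_square algebra_simps)
  ultimately have "x\<^sup>2 \<le> A\<^sup>2" using assms by (intro abs_le_square_iff[THEN iffD1]) (simp add: abs_le_iff)
  define R where "R = Complex x (sqrt (A\<^sup>2 - x\<^sup>2))"
  have "(cmod R)\<^sup>2 = A\<^sup>2" unfolding R_def cmod_def using \<open>x\<^sup>2 \<le> A\<^sup>2\<close> by simp
  moreover have "(cmod (R - complex_of_real B))\<^sup>2 = C\<^sup>2"
    unfolding R_def cmod_def using \<open>x\<^sup>2 \<le> A\<^sup>2\<close> B
    by (simp add: complex_of_real_def x_def power2_eq_square field_simps)
  ultimately show ?thesis using assms by (metis norm_ge_zero power2_eq_iff_nonneg)
qed

lemma proportional_time_shift_le: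
  fixes a b La Lb d0 t :: real
  assumes ab: "0 < a" "a \<le> b" and La: "0 < La" and t: "0 \<le> t"
    and approx: "\<bar>La - a\<bar> \<le> d0" "\<bar>Lb - b\<bar> \<le> d0"
  shows "\<bar>t / La * (a / b * Lb) - t\<bar> \<le> 2 * t * d0 / La"
proof -
  define X where "X = a * (Lb - b) - b * (La - a)"
  have "\<bar>X\<bar> \<le> 2 * b * d0"
  proof -
    have "a * \<bar>Lb - b\<bar> \<le> b * d0" "b * \<bar>La - a\<bar> \<le> b * d0"
      using approx ab by (auto intro: mult_mono mult_left_mono)
    moreover have "\<bar>a * (Lb - b)\<bar> = a * \<bar>Lb - b\<bar>" "\<bar>b * (La - a)\<bar> = b * \<bar>La - a\<bar>"
      using ab by (simp_all add: abs_mult)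
    ultimately show ?thesis using abs_triangle_ineq4[of "a * (Lb - b)" "b * (La - a)"] unfolding X_def
      by linarith
  qed
  have "t / La * (a / b * Lb) - t = t * X / (b * La)"
    using ab La unfolding X_def by (simp add: field_simps)
  then have "\<bar>t / La * (a / b * Lb) - t\<bar> = t * \<bar>X\<bar> / (b * La)"
    using ab La t by (simp add: abs_mult abs_divide)
  also have "\<dots> \<le> t * (2 * b * d0) / (b * La)"
    using \<open>\<bar>X\<bar> \<le> 2 * b * d0\<close> ab La t by (intro divide_right_mono mult_left_mono) auto
  also have "\<dots> = 2 * t * d0 / La" using ab by (simp add: field_simps)
  finally show ?thesis .
qed

lemma nonpos_if_le_div_nat:
  fixes x c :: real
  assumes "\<And>K::nat. 0 < K \<Longrightarrow> x \<le> c / real K"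
  shows "x \<le> 0"
proof (rule tendsto_lowerbound[OF lim_const_over_n[of c]])
  show "eventually (\<lambda>K. x \<le> c / real K) sequentially"
    using eventually_gt_at_top[of 0] by eventually_elim (rule assms)
qed simp

lemma le_of_linear_growth_and_scaling:
  fixes g :: "real \<Rightarrow> real"
  assumes K: "0 < K" and t: "0 \<le> t" and C: "0 \<le> C"
    and growth: "\<And>j::nat. g (real j * K) \<le> real j * E + C"
    and scaling: "\<And>T. t \<le> T \<Longrightarrow> 0 < T \<Longrightarrow> g t \<le> t / T * g T"
  shows "g t \<le> t * E / K"
proof (rule field_le_epsilon)
  fix e :: real assume e: "0 < e"
  obtain j :: nat where j: "t / K + t * C / (K * e) + 1 \<le> real j" using real_arch_simple by blast
  have q: "0 \<le> t / K" "0 \<le> t * C / (K * e)" using t K C e by auto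
  then have j0: "0 < real j" and "t / K \<le> real j" "t * C / (K * e) \<le> real j" using j by linarith+
  then have jK: "0 < real j * K" "t \<le> real j * K" "t * C \<le> real j * K * e"
    using K e by (simp_all add: divide_le_eq mult_ac)
  have "g t \<le> t / (real j * K) * g (real j * K)" using scaling jK by simp
  also have "\<dots> \<le> t / (real j * K) * (real j * E + C)"
    using growth t jK by (intro mult_left_mono) auto
  also have "\<dots> = t * E / K + t * C / (real j * K)" using j0 K by (simp add: field_simps)
  also have "t * C / (real j * K) \<le> e" using jK by (simp add: divide_le_eq mult_ac)
  finally show "g t \<le> t * E / K + e" by simp
qed

section \<open>Convexity of the metric in CAT(0) spaces\<close>

context
  assumes CAT0: "CAT0 TYPE('a::metric_space)"
begin

lemma CAT0_geodesic_seg_exists: "\<exists>c. geodesic_seg c (p::'a) q"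
  using CAT0 unfolding CAT0_def geodesic_space_def by blast

lemma CAT0_dist_geodesics_common_start:
  fixes a b c :: 'a
  assumes g1: "geodesic_seg s1 a b" and g2: "geodesic_seg s2 a c" and l: "0 \<le> l" "l \<le> 1"
  shows "dist (s1 (l * dist a b)) (s2 (l * dist a c)) \<le> l * dist b c"
proof -
  define B A C where "B = dist a b" and "A = dist a c" and "C = dist b c"
  obtain R where R: "cmod R = A" "cmod (R - complex_of_real B) = C"
    using comparison_triangle_exists[of A B C] unfolding A_def B_def C_def
    by (metis dist_commute dist_triangle zero_le_dist add.commute)
  define P where "P = complex_of_real B"
  \<comment> \<open>Compare the triangle b, a, c with the Euclidean triangle P, 0, R.\<close>
  have cmp: "dist (s1 (dist a b - s)) (s2 t) \<le> cmod ((P + of_real s * sgn (0 - P)) - of_real t * sgn R)"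
    if "s \<in> {0..dist b a}" "t \<in> {0..dist a c}" for s t
    using CAT0[unfolded CAT0_def, THEN conjunct2, rule_format,
        OF geodesic_seg_reverse[OF g1] g2, of P 0 R] R that
    by (simp add: P_def B_def A_def C_def dist_commute norm_minus_commute)
  have e1: "P + of_real ((1 - l) * B) * sgn (0 - P) = of_real l * P"
    by (cases "B = 0") (auto simp: P_def B_def sgn_of_real algebra_simps)
  have e2: "of_real (l * A) * sgn R = of_real l * R"
    using R by (cases "A = 0") (auto simp: sgn_div_norm scaleR_conv_of_real field_simps)
  have "(1 - l) * B \<in> {0..dist b a}" "l * A \<in> {0..dist a c}"
    using l mult_left_le_one_le[of B "1-l"] mult_left_le_one_le[of A l]
    by (auto simp: A_def B_def dist_commute)
  from cmp[OF this] have "dist (s1 (dist a b - (1 - l) * B)) (s2 (l * A))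
      \<le> cmod ((P + of_real ((1 - l) * B) * sgn (0 - P)) - of_real (l * A) * sgn R)" .
  also have "\<dots> = cmod (of_real l * (P - R))" unfolding e1 e2 by (simp only: right_diff_distrib)
  also have "\<dots> = l * C" using l R unfolding norm_mult P_def by (simp add: norm_minus_commute)
  finally show ?thesis unfolding A_def C_def B_def by (simp add: left_diff_distrib)
qed

lemma CAT0_dist_geodesics_convex:
  fixes p b q e :: 'a
  assumes g1: "geodesic_seg s1 p b" and g2: "geodesic_seg s2 q e" and l: "0 \<le> l" "l \<le> 1"
  shows "dist (s1 (l * dist p b)) (s2 (l * dist q e)) \<le> (1 - l) * dist p q + l * dist b e"
proof -
  obtain m where gm: "geodesic_seg m p e" using CAT0_geodesic_seg_exists by blast
  have "dist (s1 (l * dist p b)) (m (l * dist p e)) \<le> l * dist b e"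
    using CAT0_dist_geodesics_common_start[OF g1 gm l] .
  moreover have "dist (m (dist p e - (1 - l) * dist e p)) (s2 (dist q e - (1 - l) * dist e q))
      \<le> (1 - l) * dist p q"
    using CAT0_dist_geodesics_common_start[OF geodesic_seg_reverse[OF gm] geodesic_seg_reverse[OF g2]] l
    by simp
  ultimately show ?thesis
    using dist_triangle[of "s1 (l * dist p b)" "s2 (l * dist q e)" "m (l * dist p e)"]
    by (simp add: dist_commute algebra_simps)
qed

lemma CAT0_dist_rays_convex:
  fixes c c' :: "real \<Rightarrow> 'a"
  assumes r: "geodesic_ray c" "geodesic_ray c'" and t: "0 \<le> t" "t \<le> T" "0 < T"
  shows "dist (c t) (c' t) \<le> (1 - t / T) * dist (c 0) (c' 0) + (t / T) * dist (c T) (c' T)"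
  using CAT0_dist_geodesics_convex[OF geodesic_ray_geodesic_seg[OF r(1)] geodesic_ray_geodesic_seg[OF r(2)],
      of T T "t / T"]
    geodesic_ray_dist[OF r(1), of 0 T] geodesic_ray_dist[OF r(2), of 0 T] t
  by simp

lemma CAT0_dist_rays_common_start:
  fixes c c' :: "real \<Rightarrow> 'a"
  assumes "geodesic_ray c" "geodesic_ray c'" "c 0 = c' 0" "0 \<le> t" "t \<le> T" "0 < T"
  shows "dist (c t) (c' t) \<le> (t / T) * dist (c T) (c' T)"
  using CAT0_dist_rays_convex[OF assms(1,2,4-6)] assms(3) by simp

lemma asymptotic_dist_le_initial:
  fixes c c' :: "real \<Rightarrow> 'a"
  assumes a: "(c, c') \<in> asymptotic" and t: "0 \<le> t"
  shows "dist (c t) (c' t) \<le> dist (c 0) (c' 0)"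
proof -
  have r: "geodesic_ray c" "geodesic_ray c'" using a unfolding asymptotic_def by auto
  obtain B where B: "\<And>s. s \<ge> 0 \<Longrightarrow> dist (c s) (c' s) \<le> B" using a unfolding asymptotic_def by auto
  have B0: "0 \<le> B" using B[of 0] zero_le_dist[of "c 0" "c' 0"] by linarith
  \<comment> \<open>Convexity between times 0 and T, with the bound B at time T, and then T \<rightarrow> \<infinity>.\<close>
  show ?thesis
  proof (rule field_le_epsilon)
    fix e :: real assume e: "0 < e"
    define T where "T = t + 1 + t * B / e"
    have "0 \<le> t * B / e" using t B0 e by simp
    then have T: "0 < T" "t \<le> T" using t unfolding T_def by linarith+
    have "e * T = e * (t + 1) + t * B" using e unfolding T_def by (simp add: field_simps)
    moreover have "0 \<le> e * (t + 1)" using e t by simp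
    ultimately have "(t * B) / T \<le> e" using T(1) by (simp add: pos_divide_le_eq mult.commute)
    have "dist (c t) (c' t) \<le> (1 - t / T) * dist (c 0) (c' 0) + (t / T) * dist (c T) (c' T)"
      using CAT0_dist_rays_convex[OF r t T(2,1)] .
    also have "(1 - t / T) * dist (c 0) (c' 0) \<le> dist (c 0) (c' 0)"
      using T t by (simp add: mult_left_le_one_le)
    also have "(t / T) * dist (c T) (c' T) \<le> (t / T) * B"
      using B[of T] T t by (intro mult_left_mono) auto
    also have "\<dots> \<le> e" using \<open>(t * B) / T \<le> e\<close> by simp
    finally show "dist (c t) (c' t) \<le> dist (c 0) (c' 0) + e" by simp
  qed
qed

lemma asymptotic_eq_if_same_start:
  fixes c c' :: "real \<Rightarrow> 'a"
  assumes a: "(c, c') \<in> asymptotic" and c0: "c 0 = c' 0"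
  shows "c = c'"
proof
  fix t
  have r: "geodesic_ray c" "geodesic_ray c'" using a unfolding asymptotic_def by auto
  show "c t = c' t"
  proof (cases "t < 0")
    case True
    then show ?thesis using r c0 unfolding geodesic_ray_def by simp
  next
    case False
    then show ?thesis using asymptotic_dist_le_initial[OF a, of t] c0 by simp
  qed
qed

lemma ray_to_eqI:
  fixes x :: 'a
  assumes "\<alpha> \<in> visual_boundary TYPE('a)" "c \<in> \<alpha>" "c 0 = x"
  shows "ray_to x \<alpha> = c"
  unfolding ray_to_def
  using asymptotic_eq_if_same_start[OF asymptotic_if_in_visual_boundary[OF assms(1)]] assms(2,3)
  by (intro the_equality) auto

lemma CAT0_geodesic_seg_near_ray:
  fixes x :: 'a
  assumes c: "geodesic_ray c" and s: "geodesic_seg s x (c a)" and a: "0 \<le> a"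
    and l: "0 \<le> l" "l \<le> 1"
  shows "dist (s (l * dist x (c a))) (c (l * a)) \<le> dist x (c 0)"
proof -
  have "dist (s (l * dist x (c a))) (c (l * dist (c 0) (c a)))
      \<le> (1 - l) * dist x (c 0) + l * dist (c a) (c a)"
    using CAT0_dist_geodesics_convex[OF s geodesic_ray_geodesic_seg[OF c a] l] .
  also have "\<dots> \<le> dist x (c 0)" using l by (simp add: mult_left_le_one_le)
  finally show ?thesis using geodesic_ray_dist[OF c, of 0 a] a by simp
qed

lemma CAT0_geodesic_segs_to_ray_close:
  fixes x :: 'a
  assumes c: "geodesic_ray c" and s: "geodesic_seg s x (c a)" and s': "geodesic_seg s' x (c b)"
    and ab: "0 < a" "a \<le> b"
    and t: "0 \<le> t" "t \<le> dist x (c a)" "t \<le> dist x (c b)" "0 < dist x (c a)"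
  shows "dist (s t) (s' t) \<le> 3 * t * dist x (c 0) / dist x (c a)"
proof -
  define d0 La Lb where "d0 = dist x (c 0)" and "La = dist x (c a)" and "Lb = dist x (c b)"
  \<comment> \<open>y is the point of s' at the proportional time a/b; it is d0-close to c a.\<close>
  define y where "y = s' (a / b * Lb)"
  have yLb: "0 \<le> a / b * Lb" "a / b * Lb \<le> Lb"
    using ab mult_left_le_one_le[of Lb "a / b"] unfolding Lb_def by auto
  have "dist y (c a) \<le> d0"
    using CAT0_geodesic_seg_near_ray[OF c s', of "a / b"] ab unfolding y_def d0_def Lb_def by simp
  have s'y: "geodesic_seg s' x y" unfolding y_def
    using geodesic_seg_initial_part[OF s'] yLb unfolding Lb_def by blast
  have dxy: "dist x y = a / b * Lb"
    using geodesic_seg_dist[OF s', of 0 "a / b * Lb"] yLb s' ab unfolding y_def Lb_def geodesic_seg_def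
    by (simp add: abs_mult)
  define l where "l = t / La"
  have l: "0 \<le> l" "l \<le> 1" using t unfolding l_def La_def by auto
  have "dist (s t) (s' (l * (a / b * Lb))) \<le> l * d0"
  proof -
    have "dist (s (l * La)) (s' (l * (a / b * Lb))) \<le> l * dist (c a) y"
      using CAT0_dist_geodesics_common_start[OF s s'y l] unfolding dxy La_def .
    also have "\<dots> \<le> l * d0" using \<open>dist y (c a) \<le> d0\<close> l by (simp add: dist_commute mult_left_mono)
    finally show ?thesis using t unfolding l_def La_def by simp
  qed
  moreover have "dist (s' (l * (a / b * Lb))) (s' t) \<le> 2 * t * d0 / La"
  proof -
    have "0 \<le> l * (a / b * Lb)" "l * (a / b * Lb) \<le> Lb"
      using l yLb mult_left_le_one_le[of "a / b * Lb" l] by (auto simp del: times_divide_eq_right)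
    then have "dist (s' (l * (a / b * Lb))) (s' t) = \<bar>l * (a / b * Lb) - t\<bar>"
      using geodesic_seg_dist[OF s', of "l * (a / b * Lb)" t] t unfolding Lb_def by simp
    also have "\<dots> \<le> 2 * t * d0 / La"
      using proportional_time_shift_le[OF ab _ t(1)] geodesic_ray_dist_approx[OF c] ab t(4)
      unfolding l_def La_def Lb_def d0_def by simp
    finally show ?thesis .
  qed
  ultimately have "dist (s t) (s' t) \<le> l * d0 + 2 * t * d0 / La"
    using dist_triangle[of "s t" "s' t" "s' (l * (a / b * Lb))"] by linarith
  also have "\<dots> = 3 * t * d0 / La" unfolding l_def by (simp add: field_simps)
  finally show ?thesis unfolding d0_def La_def .
qed

lemma CAT0_geodesic_segs_to_ray_Cauchy:
  fixes x :: 'a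
  assumes c: "geodesic_ray c" and \<sigma>: "\<And>n. geodesic_seg (\<sigma> n) x (c (real n))" and t: "0 \<le> t"
  shows "Cauchy (\<lambda>n. \<sigma> n t)"
proof (rule metric_CauchyI)
  fix e :: real assume e: "0 < e"
  define d0 L where "d0 = dist x (c 0)" and "L n = dist x (c (real n))" for n :: nat
  have "eventually (\<lambda>n. 0 < n \<and> t + 1 + 3 * t * d0 / e \<le> L n) sequentially"
    using filterlim_dist_geodesic_ray[OF c] eventually_gt_at_top[of 0]
    unfolding filterlim_at_top L_def by (auto intro: eventually_conj)
  then obtain N where N: "\<And>n. N \<le> n \<Longrightarrow> 0 < n \<and> t + 1 + 3 * t * d0 / e \<le> L n"
    unfolding eventually_sequentially by blast
  have close: "dist (\<sigma> n t) (\<sigma> m t) < e" if "N \<le> n" "n \<le> m" for n m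
  proof -
    have "0 \<le> 3 * t * d0 / e" using t e unfolding d0_def by simp
    then have n: "0 < n" "t + 1 \<le> L n" "t + 1 \<le> L m" "3 * t * d0 / e < L n"
      using N[of n] N[of m] that t by auto
    have "dist (\<sigma> n t) (\<sigma> m t) \<le> 3 * t * d0 / L n"
      using CAT0_geodesic_segs_to_ray_close[OF c \<sigma>[of n] \<sigma>[of m], of t] n that t
      unfolding L_def d0_def by force
    also have "\<dots> < e" using n e t by (simp add: divide_less_eq mult.commute)
    finally show ?thesis .
  qed
  show "\<exists>M. \<forall>m\<ge>M. \<forall>n\<ge>M. dist (\<sigma> m t) (\<sigma> n t) < e"
    using close by (metis dist_commute nle_le)
qed

lemma CAT0_geodesic_seg_fellow_travels_ray:
  fixes x :: 'a
  assumes c: "geodesic_ray c" and s: "geodesic_seg s x (c a)" and a: "0 \<le> a"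
    and t: "0 \<le> t" "t \<le> dist x (c a)"
  shows "dist (s t) (c t) \<le> 2 * dist x (c 0)"
proof (cases "t = 0")
  case True
  then show ?thesis using s unfolding geodesic_seg_def by simp
next
  case False
  define d0 La where "d0 = dist x (c 0)" and "La = dist x (c a)"
  have La: "0 < La" using t False unfolding La_def by linarith
  have "\<bar>La - a\<bar> \<le> d0" using geodesic_ray_dist_approx[OF c a] unfolding d0_def La_def .
  define l where "l = t / La"
  have l: "0 \<le> l" "l \<le> 1" "l * La = t" using t La unfolding l_def La_def by auto
  have "dist (s t) (c (l * a)) \<le> d0"
    using CAT0_geodesic_seg_near_ray[OF c s a l(1,2)] l(3) unfolding d0_def La_def by simp
  moreover have "dist (c (l * a)) (c t) \<le> d0"
  proof -
    have "l * a - t = l * (a - La)" using l(3) by (simp add: algebra_simps)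
    then have "dist (c (l * a)) (c t) = l * \<bar>a - La\<bar>"
      using geodesic_ray_dist[OF c, of "l * a" t] l a t by (simp add: abs_mult)
    also have "\<dots> \<le> 1 * d0"
      using l \<open>\<bar>La - a\<bar> \<le> d0\<close> by (intro mult_mono) (auto simp: abs_minus_commute)
    finally show ?thesis by simp
  qed
  ultimately show ?thesis using dist_triangle[of "s t" "c t" "c (l * a)"] unfolding d0_def by linarith
qed

context
  assumes proper: "proper_space TYPE('a)"
begin

lemma CAT0_asymptotic_ray_exists:
  fixes c :: "real \<Rightarrow> 'a" and x :: 'a
  assumes c: "geodesic_ray c"
  shows "\<exists>r. geodesic_ray r \<and> r 0 = x \<and> (c, r) \<in> asymptotic"
proof -
  define \<sigma> where "\<sigma> n = (SOME s. geodesic_seg s x (c (real n)))" for n :: nat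
  have \<sigma>: "geodesic_seg (\<sigma> n) x (c (real n))" for n
    unfolding \<sigma>_def using CAT0_geodesic_seg_exists by (rule someI_ex)
  have L: "filterlim (\<lambda>n. dist x (c (real n))) at_top sequentially"
    using filterlim_dist_geodesic_ray[OF c] .
  have "convergent (\<lambda>n. \<sigma> n t)" if "0 \<le> t" for t
    using proper_space_convergent[OF proper CAT0_geodesic_segs_to_ray_Cauchy[OF c \<sigma> that]] .
  define r where "r t = lim (\<lambda>n. \<sigma> n (max 0 t))" for t
  have lim: "(\<lambda>n. \<sigma> n t) \<longlonglongrightarrow> r t" if "0 \<le> t" for t
    using \<open>0 \<le> t \<Longrightarrow> convergent _\<close> that unfolding r_def convergent_LIMSEQ_iff by simp
  have r: "geodesic_ray r" "r 0 = x"
    using geodesic_ray_of_limit[OF \<sigma> L lim] unfolding r_def by simp_all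
  have "dist (c t) (r t) \<le> 2 * dist x (c 0)" if t: "0 \<le> t" for t
  proof -
    have "eventually (\<lambda>n. t \<le> dist x (c (real n))) sequentially"
      using L unfolding filterlim_at_top by blast
    then have "eventually (\<lambda>n. dist (\<sigma> n t) (c t) \<le> 2 * dist x (c 0)) sequentially"
      by eventually_elim (use CAT0_geodesic_seg_fellow_travels_ray[OF c \<sigma>] t in simp)
    with tendsto_dist[OF lim[OF t] tendsto_const] have "dist (r t) (c t) \<le> 2 * dist x (c 0)"
      by (rule tendsto_upperbound) simp
    then show ?thesis by (simp add: dist_commute)
  qed
  then have "(c, r) \<in> asymptotic" unfolding asymptotic_def using c r by blast
  then show ?thesis using r by blast
qed

lemma
  fixes x :: 'a
  assumes "\<alpha> \<in> visual_boundary TYPE('a)"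
  shows ray_to_mem: "ray_to x \<alpha> \<in> \<alpha>"
    and geodesic_ray_ray_to: "geodesic_ray (ray_to x \<alpha>)"
    and ray_to_0: "ray_to x \<alpha> 0 = x"
proof -
  obtain c where c: "geodesic_ray c" "\<alpha> = asymptotic `` {c}" using assms by (rule visual_boundaryE)
  obtain r where r: "geodesic_ray r" "r 0 = x" "(c, r) \<in> asymptotic"
    using CAT0_asymptotic_ray_exists[OF c(1)] by blast
  then have "r \<in> \<alpha>" using c by auto
  with ray_to_eqI[OF assms this r(2)] r show "ray_to x \<alpha> \<in> \<alpha>" "geodesic_ray (ray_to x \<alpha>)" "ray_to x \<alpha> 0 = x"
    by simp_all
qed

lemma dist_ray_to_le:
  fixes p q :: 'a
  assumes "\<alpha> \<in> visual_boundary TYPE('a)" "0 \<le> t"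
  shows "dist (ray_to p \<alpha> t) (ray_to q \<alpha> t) \<le> dist p q"
  using asymptotic_dist_le_initial[OF asymptotic_if_in_visual_boundary[OF assms(1) ray_to_mem ray_to_mem]]
    assms by (simp add: ray_to_0)

lemma ray_to_ray_shift:
  fixes x :: 'a
  assumes "\<alpha> \<in> visual_boundary TYPE('a)" "0 \<le> a"
  shows "ray_to (ray_to x \<alpha> a) \<alpha> = ray_shift a (ray_to x \<alpha>)"
proof (rule ray_to_eqI[OF assms(1)])
  show "ray_shift a (ray_to x \<alpha>) \<in> \<alpha>"
    using visual_boundary_asymptotic_closed[OF assms(1) ray_to_mem[OF assms(1)]]
      asymptotic_ray_shift[OF geodesic_ray_ray_to[OF assms(1)] assms(2)] .
qed (simp add: ray_shift_def)

lemma ray_gap_le_change_basepoint: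
  fixes p q :: 'a
  assumes "\<alpha> \<in> visual_boundary TYPE('a)" "\<beta> \<in> visual_boundary TYPE('a)" "0 \<le> t"
  shows "ray_gap p \<alpha> \<beta> t \<le> ray_gap q \<alpha> \<beta> t + 2 * dist p q"
  using dist_ray_to_le[OF assms(1,3), of p q] dist_ray_to_le[OF assms(2,3), of p q]
    dist_triangle[of "ray_to p \<alpha> t" "ray_to p \<beta> t" "ray_to q \<alpha> t"]
    dist_triangle[of "ray_to q \<alpha> t" "ray_to p \<beta> t" "ray_to q \<beta> t"]
  unfolding ray_gap_def by (simp add: dist_commute)

lemma ray_gap_le_scaled:
  fixes p :: 'a
  assumes "\<alpha> \<in> visual_boundary TYPE('a)" "\<beta> \<in> visual_boundary TYPE('a)" "0 \<le> t" "t \<le> T" "0 < T"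
  shows "ray_gap p \<alpha> \<beta> t \<le> (t / T) * ray_gap p \<alpha> \<beta> T"
  unfolding ray_gap_def
  using CAT0_dist_rays_common_start[OF geodesic_ray_ray_to[OF assms(1), of p] geodesic_ray_ray_to[OF assms(2), of p]]
    ray_to_0[OF assms(1), of p] ray_to_0[OF assms(2), of p] assms(3-5) by simp

section \<open>Growth of the gap between two rays\<close>

lemma ray_gap_le_sum_of_steps:
  fixes p :: 'a
  assumes \<alpha>: "\<alpha> \<in> visual_boundary TYPE('a)" and \<beta>: "\<beta> \<in> visual_boundary TYPE('a)" and K: "0 \<le> K"
    and step: "\<And>j::nat. ray_gap (ray_to p \<alpha> (real j * K)) \<alpha> \<beta> K \<le> E"
  shows "ray_gap p \<alpha> \<beta> (real j * K) \<le> real j * E"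
proof (induction j)
  case 0
  then show ?case unfolding ray_gap_def by (simp add: ray_to_0[OF \<alpha>] ray_to_0[OF \<beta>])
next
  case (Suc j)
  \<comment> \<open>Restart both rays at the point q reached by the \<alpha>-ray at time jK.\<close>
  define q where "q = ray_to p \<alpha> (real j * K)"
  have jK: "0 \<le> real j * K" using K by simp
  have "dist (ray_to p \<beta> (real j * K + K)) (ray_to q \<beta> K) \<le> dist (ray_to p \<beta> (real j * K)) q"
    using dist_ray_to_le[OF \<beta> K, of "ray_to p \<beta> (real j * K)" q] ray_to_ray_shift[OF \<beta> jK, of p] K
    by (simp add: ray_shift_apply)
  moreover have "ray_to q \<alpha> K = ray_to p \<alpha> (real j * K + K)"
    using ray_to_ray_shift[OF \<alpha> jK, of p] K unfolding q_def by (simp add: ray_shift_apply)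
  then have "dist (ray_to p \<alpha> (real j * K + K)) (ray_to q \<beta> K) \<le> E"
    using step[of j] unfolding ray_gap_def q_def by simp
  ultimately show ?case
    using Suc.IH dist_triangle[of "ray_to p \<alpha> (real j * K + K)" "ray_to p \<beta> (real j * K + K)" "ray_to q \<beta> K"]
    unfolding ray_gap_def q_def by (simp add: dist_commute algebra_simps)
qed

lemma ray_gap_linear_growth:
  fixes x0 :: 'a
  assumes \<alpha>: "\<alpha> \<in> visual_boundary TYPE('a)" and \<beta>: "\<beta> \<in> visual_boundary TYPE('a)" and K: "0 < K"
    and far: "\<And>p. R < dist x0 p \<Longrightarrow> ray_gap p \<alpha> \<beta> K \<le> E"
  shows "\<exists>C\<ge>0. \<forall>j::nat. ray_gap x0 \<alpha> \<beta> (real j * K) \<le> real j * E + C"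
proof -
  define R' where "R' = max R 0 + 1"
  define p where "p = ray_to x0 \<alpha> R'"
  have R': "0 < R'" "R < R'" unfolding R'_def by auto
  have dist_eq: "dist x0 (ray_to x0 \<alpha> s) = s" if "0 \<le> s" for s
    using geodesic_ray_dist[OF geodesic_ray_ray_to[OF \<alpha>] order.refl that] that
    by (simp add: ray_to_0[OF \<alpha>])
  have step: "ray_gap (ray_to p \<alpha> (real j * K)) \<alpha> \<beta> K \<le> E" for j :: nat
  proof (rule far)
    have "0 \<le> real j * K" using K by simp
    moreover have "ray_to p \<alpha> (real j * K) = ray_to x0 \<alpha> (R' + real j * K)"
      using ray_to_ray_shift[OF \<alpha>, of R' x0] R' K unfolding p_def by (simp add: ray_shift_apply)
    ultimately show "R < dist x0 (ray_to p \<alpha> (real j * K))" using dist_eq[of "R' + real j * K"] R' by simp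
  qed
  have "dist x0 p = R'" using dist_eq[of R'] R' unfolding p_def by simp
  then have "ray_gap x0 \<alpha> \<beta> (real j * K) \<le> real j * E + 2 * R'" for j :: nat
    using ray_gap_le_sum_of_steps[OF \<alpha> \<beta> less_imp_le[OF K] step, of j]
      ray_gap_le_change_basepoint[OF \<alpha> \<beta>, of "real j * K" x0 p] K by simp
  then show ?thesis using R' by (intro exI[of _ "2 * R'"]) auto
qed

lemma ray_gap_eq_0_if_eventually_small:
  fixes x0 :: 'a and Q :: "'a set"
  assumes \<alpha>: "\<alpha> \<in> visual_boundary TYPE('a)" and \<beta>: "\<beta> \<in> visual_boundary TYPE('a)"
    and net: "\<And>p. \<exists>q\<in>Q. dist p q \<le> D"
    and small: "\<And>e. 0 < e \<Longrightarrow> \<exists>R. \<forall>q\<in>Q. R < dist x0 q \<longrightarrow> boundary_dist q \<alpha> \<beta> < e"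
    and t: "0 \<le> t"
  shows "ray_gap x0 \<alpha> \<beta> t = 0"
proof -
  have bound: "ray_gap x0 \<alpha> \<beta> t \<le> t * (1 + 2 * D) / real K" if K: "0 < K" for K :: nat
  proof -
    obtain R where R: "\<And>q. q \<in> Q \<Longrightarrow> R < dist x0 q \<Longrightarrow> boundary_dist q \<alpha> \<beta> < (1/2) ^ K"
      using small[of "(1/2) ^ K"] by auto
    have far: "ray_gap p \<alpha> \<beta> (real K) \<le> 1 + 2 * D" if p: "R + D < dist x0 p" for p
    proof -
      obtain q where q: "q \<in> Q" "dist p q \<le> D" using net by blast
      then have "R < dist x0 q" using p dist_triangle[of x0 p q] dist_commute[of q p] by linarith
      then have "min (ray_gap q \<alpha> \<beta> (real K)) ((1/2) ^ K) < (1/2) ^ K"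
        using R[OF q(1)] min_ray_gap_le_boundary_dist[of q \<alpha> \<beta> "K - 1"] K by simp
      then have "ray_gap q \<alpha> \<beta> (real K) \<le> 1"
        using power_le_one[of "1/2::real" K] by linarith
      then show ?thesis
        using ray_gap_le_change_basepoint[OF \<alpha> \<beta>, of "real K" p q] q(2) by simp
    qed
    obtain C where "0 \<le> C" "\<And>j::nat. ray_gap x0 \<alpha> \<beta> (real j * real K) \<le> real j * (1 + 2 * D) + C"
      using ray_gap_linear_growth[where K = "real K" and R = "R + D" and E = "1 + 2 * D", OF \<alpha> \<beta> _ far] K
      by auto
    then show ?thesis
      using le_of_linear_growth_and_scaling[of "real K" t C] ray_gap_le_scaled[OF \<alpha> \<beta> t] K t by simp
  qed
  have "ray_gap x0 \<alpha> \<beta> t \<le> 0"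
    by (rule nonpos_if_le_div_nat[OF bound])
  then show ?thesis unfolding ray_gap_def by simp
qed

lemma visual_boundary_eq_if_ray_gap_eq_0:
  fixes x0 :: 'a
  assumes \<alpha>: "\<alpha> \<in> visual_boundary TYPE('a)" and \<beta>: "\<beta> \<in> visual_boundary TYPE('a)"
    and gap: "\<And>t. 0 \<le> t \<Longrightarrow> ray_gap x0 \<alpha> \<beta> t = 0"
  shows "\<alpha> = \<beta>"
proof -
  have "ray_to x0 \<alpha> t = ray_to x0 \<beta> t" for t
  proof (cases "t < 0")
    case True
    then show ?thesis using geodesic_ray_ray_to[OF \<alpha>] geodesic_ray_ray_to[OF \<beta>] ray_to_0[OF \<alpha>] ray_to_0[OF \<beta>]
      unfolding geodesic_ray_def by metis
  next
    case False
    then show ?thesis using gap[of t] unfolding ray_gap_def by simp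
  qed
  then have "ray_to x0 \<alpha> \<in> \<beta>" using ray_to_mem[OF \<beta>] by (metis ext)
  then show ?thesis using visual_boundary_eqI[OF \<alpha> \<beta> ray_to_mem[OF \<alpha>]] by blast
qed

lemma ray_gap_le_if_rays_meet_ball:
  fixes p y0 :: 'a
  assumes \<alpha>: "\<alpha> \<in> visual_boundary TYPE('a)" and \<beta>: "\<beta> \<in> visual_boundary TYPE('a)"
    and t: "0 \<le> t" "dist y0 (ray_to p \<alpha> t) \<le> M" and u: "0 \<le> u" "dist y0 (ray_to p \<beta> u) \<le> M"
  shows "dist y0 p - M \<le> t" "ray_gap p \<alpha> \<beta> t \<le> 4 * M"
proof -
  have dt: "dist p (ray_to p \<alpha> t) = t" and du: "dist p (ray_to p \<beta> u) = u"
    using geodesic_ray_dist[OF geodesic_ray_ray_to[OF \<alpha>], of 0 t]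
      geodesic_ray_dist[OF geodesic_ray_ray_to[OF \<beta>], of 0 u] t u
    by (simp_all add: ray_to_0[OF \<alpha>] ray_to_0[OF \<beta>])
  then have "\<bar>t - dist y0 p\<bar> \<le> M" "\<bar>u - dist y0 p\<bar> \<le> M"
    using t u dist_triangle[of y0 p "ray_to p \<alpha> t"] dist_triangle[of p "ray_to p \<alpha> t" y0]
      dist_triangle[of y0 p "ray_to p \<beta> u"] dist_triangle[of p "ray_to p \<beta> u" y0]
    by (auto simp: dist_commute abs_le_iff)
  then show "dist y0 p - M \<le> t" by linarith
  have "dist (ray_to p \<beta> u) (ray_to p \<beta> t) = \<bar>u - t\<bar>"
    using geodesic_ray_dist[OF geodesic_ray_ray_to[OF \<beta>] u(1) t(1)] .
  moreover have "dist (ray_to p \<alpha> t) (ray_to p \<beta> u) \<le> 2 * M"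
    using dist_triangle[of "ray_to p \<alpha> t" "ray_to p \<beta> u" y0] t(2) u(2) by (simp add: dist_commute)
  ultimately show "ray_gap p \<alpha> \<beta> t \<le> 4 * M"
    unfolding ray_gap_def using dist_triangle[of "ray_to p \<alpha> t" "ray_to p \<beta> t" "ray_to p \<beta> u"]
      \<open>\<bar>t - dist y0 p\<bar> \<le> M\<close> \<open>\<bar>u - dist y0 p\<bar> \<le> M\<close> by linarith
qed

lemma sum_ray_gap_le:
  fixes p :: 'a
  assumes \<alpha>: "\<alpha> \<in> visual_boundary TYPE('a)" and \<beta>: "\<beta> \<in> visual_boundary TYPE('a)"
    and t: "real N \<le> t" "0 < t" and B: "ray_gap p \<alpha> \<beta> t \<le> B"
  shows "(\<Sum>k<N. ray_gap p \<alpha> \<beta> (real (Suc k))) \<le> real N * (real N * B / t)"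
proof -
  have "ray_gap p \<alpha> \<beta> (real (Suc k)) \<le> real N * B / t" if k: "k < N" for k
  proof -
    have "0 \<le> B" using B unfolding ray_gap_def by (meson order.trans zero_le_dist)
    have "ray_gap p \<alpha> \<beta> (real (Suc k)) \<le> (real (Suc k) / t) * ray_gap p \<alpha> \<beta> t"
      using ray_gap_le_scaled[OF \<alpha> \<beta>] k t by simp
    also have "\<dots> \<le> (real N / t) * B"
      using B k t \<open>0 \<le> B\<close> by (intro mult_mono divide_right_mono) (auto simp: ray_gap_def)
    finally show ?thesis by simp
  qed
  then have "(\<Sum>k<N. ray_gap p \<alpha> \<beta> (real (Suc k))) \<le> (\<Sum>k<N. real N * B / t)"
    by (intro sum_mono) auto
  then show ?thesis by simp
qed

lemma boundary_dist_tendsto_0: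
  fixes p :: "nat \<Rightarrow> 'a" and y0 :: 'a
  assumes \<alpha>: "\<alpha> \<in> visual_boundary TYPE('a)" and \<beta>: "\<beta> \<in> visual_boundary TYPE('a)"
    and lim: "filterlim (\<lambda>i. dist y0 (p i)) at_top sequentially"
    and meet: "\<And>i. (\<exists>t\<ge>0. ray_to (p i) \<alpha> t \<in> cball y0 M) \<and> (\<exists>t\<ge>0. ray_to (p i) \<beta> t \<in> cball y0 M)"
  shows "(\<lambda>i. boundary_dist (p i) \<alpha> \<beta>) \<longlonglongrightarrow> 0"
proof (rule tendstoI)
  fix e :: real assume e: "0 < e"
  have M: "0 \<le> M" using meet[of 0] by (auto simp: mem_cball intro: order.trans[OF zero_le_dist])
  \<comment> \<open>The tail of the series is below e/2; the first N terms are small once the rays from p i pass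
    through the ball around y0 at a large time t, since the gap grows at most linearly up to time t.\<close>
  obtain N :: nat where N: "(1/2::real) ^ N < e / 2" using real_arch_pow_inv[of "e/2" "1/2"] e by auto
  define W where "W = M + real N + 8 * M * (real N)\<^sup>2 / e + 1"
  have "eventually (\<lambda>i. W \<le> dist y0 (p i)) sequentially" using lim unfolding filterlim_at_top by blast
  then show "eventually (\<lambda>i. dist (boundary_dist (p i) \<alpha> \<beta>) 0 < e) sequentially"
  proof (rule eventually_mono)
    fix i assume W: "W \<le> dist y0 (p i)"
    obtain t u where t: "0 \<le> t" "dist y0 (ray_to (p i) \<alpha> t) \<le> M"
      and u: "0 \<le> u" "dist y0 (ray_to (p i) \<beta> u) \<le> M"
      using meet[of i] by (auto simp: mem_cball)
    note near = ray_gap_le_if_rays_meet_ball[OF \<alpha> \<beta> t u]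
    have "0 \<le> 8 * M * (real N)\<^sup>2 / e" using M e by simp
    then have tN: "real N \<le> t" "0 < t" "8 * M * (real N)\<^sup>2 / e \<le> t"
      using near(1) W unfolding W_def by linarith+
    have "(\<Sum>k<N. ray_gap (p i) \<alpha> \<beta> (real (Suc k))) \<le> real N * (real N * (4 * M) / t)"
      using sum_ray_gap_le[OF \<alpha> \<beta> tN(1,2) near(2)] .
    also have "\<dots> \<le> e / 2"
      using tN(2,3) e by (simp add: divide_le_eq pos_divide_le_eq power2_eq_square mult_ac)
    finally have "boundary_dist (p i) \<alpha> \<beta> < e"
      using boundary_dist_le_partial_sum[of "p i" \<alpha> \<beta> N] N by linarith
    then show "dist (boundary_dist (p i) \<alpha> \<beta>) 0 < e"
      using boundary_dist_nonneg[of "p i" \<alpha> \<beta>] by simp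
  qed
qed

section \<open>Boundary distances along orbits\<close>

lemma ray_to_boundary_act:
  fixes x0 :: 'a
  assumes \<alpha>: "\<alpha> \<in> visual_boundary TYPE('a)"
    and G: "group G" "isometric_action G act" "g \<in> carrier G"
  shows "ray_to x0 (boundary_act act g \<alpha>) = act g \<circ> ray_to (act (inv\<^bsub>G\<^esub> g) x0) \<alpha>"
  unfolding ray_to_def[of x0 "boundary_act act g \<alpha>"]
proof (rule the_equality)
  let ?r = "ray_to (act (inv\<^bsub>G\<^esub> g) x0) \<alpha>"
  show "act g \<circ> ?r \<in> boundary_act act g \<alpha> \<and> (act g \<circ> ?r) 0 = x0"
    unfolding boundary_act_def using ray_to_mem[OF \<alpha>] ray_to_0[OF \<alpha>] isometric_action_inv_cancel[OF G]
    by auto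
  fix c assume c: "c \<in> boundary_act act g \<alpha> \<and> c 0 = x0"
  then obtain r where r: "r \<in> \<alpha>" "c = act g \<circ> r" unfolding boundary_act_def by auto
  then have "r 0 = act (inv\<^bsub>G\<^esub> g) x0" using c isometric_action_inv_cancel(1)[OF G] by force
  then show "c = act g \<circ> ?r" using ray_to_eqI[OF \<alpha> r(1)] r(2) by simp
qed

lemma boundary_dist_boundary_act:
  fixes x0 :: 'a
  assumes "\<alpha> \<in> visual_boundary TYPE('a)" "\<beta> \<in> visual_boundary TYPE('a)"
    and G: "group G" "isometric_action G act" "g \<in> carrier G"
  shows "boundary_dist x0 (boundary_act act g \<alpha>) (boundary_act act g \<beta>)
    = boundary_dist (act (inv\<^bsub>G\<^esub> g) x0) \<alpha> \<beta>"
  unfolding boundary_dist_def ray_to_boundary_act[OF assms(1) G] ray_to_boundary_act[OF assms(2) G]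
  using isometric_action_dist[OF G(2,3)] by simp

lemma Limsup_boundary_dist_gt_0:
  fixes G :: "('g, 'b) monoid_scheme" and act :: "'g \<Rightarrow> 'a \<Rightarrow> 'a" and x0 :: 'a
  assumes G: "group G" "isometric_action G act" and net: "\<And>p. \<exists>g\<in>carrier G. dist p (act g x0) \<le> D"
    and \<alpha>: "\<alpha> \<in> visual_boundary TYPE('a)" and \<beta>: "\<beta> \<in> visual_boundary TYPE('a)" and "\<alpha> \<noteq> \<beta>"
  shows "0 < Limsup (leaving_finite G)
    (\<lambda>g. ereal (boundary_dist x0 (boundary_act act g \<alpha>) (boundary_act act g \<beta>)))" (is "0 < Limsup _ ?f")
proof (rule ccontr)
  assume "\<not> 0 < Limsup (leaving_finite G) ?f"
  then have L: "Limsup (leaving_finite G) ?f \<le> 0" by simp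
  let ?Q = "(\<lambda>g. act g x0) ` carrier G"
  have small: "\<exists>R. \<forall>q\<in>?Q. R < dist x0 q \<longrightarrow> boundary_dist q \<alpha> \<beta> < e" if e: "0 < e" for e
  proof -
    have "Limsup (leaving_finite G) ?f < ereal e" using L e by (simp add: le_less_trans)
    then have "eventually (\<lambda>g. ?f g < ereal e) (leaving_finite G)" by (rule Limsup_lessD)
    then obtain R where R: "\<forall>g\<in>carrier G. R < dist x0 (act (inv\<^bsub>G\<^esub> g) x0) \<longrightarrow> ?f g < ereal e"
      using eventually_leaving_finite_beyond[where \<phi> = "\<lambda>g. dist x0 (act (inv\<^bsub>G\<^esub> g) x0)"] by blast
    have "boundary_dist (act g x0) \<alpha> \<beta> < e" if g: "g \<in> carrier G" "R < dist x0 (act g x0)" for g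
    proof -
      have h: "inv\<^bsub>G\<^esub> g \<in> carrier G" "act (inv\<^bsub>G\<^esub> (inv\<^bsub>G\<^esub> g)) x0 = act g x0"
        using group.inv_closed[OF G(1) g(1)] group.inv_inv[OF G(1) g(1)] by simp_all
      then show ?thesis
        using R[rule_format, OF h(1)] g(2) boundary_dist_boundary_act[OF \<alpha> \<beta> G h(1), of x0] by simp
    qed
    then show ?thesis by blast
  qed
  have "\<exists>q\<in>?Q. dist p q \<le> D" for p using net[of p] by blast
  then have "ray_gap x0 \<alpha> \<beta> t = 0" if "0 \<le> t" for t
    using ray_gap_eq_0_if_eventually_small[OF \<alpha> \<beta> _ small that] by blast
  then show False using visual_boundary_eq_if_ray_gap_eq_0[OF \<alpha> \<beta>] \<open>\<alpha> \<noteq> \<beta>\<close> by blast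
qed

lemma Liminf_boundary_dist_eq_0:
  fixes G :: "('g, 'b) monoid_scheme" and act :: "'g \<Rightarrow> 'a \<Rightarrow> 'a" and x0 y0 :: 'a
  assumes G: "group G" "isometric_action G act"
    and \<alpha>: "\<alpha> \<in> visual_boundary TYPE('a)" and \<beta>: "\<beta> \<in> visual_boundary TYPE('a)"
    and gs: "\<And>i. gs i \<in> carrier G"
    and lim: "filterlim (\<lambda>i. dist y0 (act (gs i) x0)) at_top sequentially"
    and meet: "\<And>i. (\<exists>t\<ge>0. ray_to (act (gs i) x0) \<alpha> t \<in> cball y0 M) \<and>
                   (\<exists>t\<ge>0. ray_to (act (gs i) x0) \<beta> t \<in> cball y0 M)"
  shows "Liminf (leaving_finite G)
    (\<lambda>g. ereal (boundary_dist x0 (boundary_act act g \<alpha>) (boundary_act act g \<beta>))) = 0"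
    (is "Liminf _ ?f = 0")
proof (rule antisym)
  define h where "h i = inv\<^bsub>G\<^esub> gs i" for i
  have h: "h i \<in> carrier G" "act (inv\<^bsub>G\<^esub> h i) x0 = act (gs i) x0" for i
    unfolding h_def using group.inv_closed[OF G(1) gs] group.inv_inv[OF G(1) gs] by simp_all
  have "filterlim h (leaving_finite G) sequentially"
    using filterlim_leaving_finite[of h G "\<lambda>g. dist y0 (act (inv\<^bsub>G\<^esub> g) x0)"] h lim by simp
  moreover have "?f (h i) = ereal (boundary_dist (act (gs i) x0) \<alpha> \<beta>)" for i
    using boundary_dist_boundary_act[OF \<alpha> \<beta> G h(1)] h(2) by simp
  then have "(\<lambda>i. ?f (h i)) \<longlonglongrightarrow> 0"
    unfolding zero_ereal_def using boundary_dist_tendsto_0[OF \<alpha> \<beta> lim meet] by (simp add: tendsto_ereal)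
  ultimately show "Liminf (leaving_finite G) ?f \<le> 0" by (rule Liminf_le_if_tendsto_along)
qed (intro Liminf_bounded, simp add: boundary_dist_nonneg)

end

end

theorem theorem3p2:
  fixes G :: "('g, 'b) monoid_scheme"
    and act :: "'g \<Rightarrow> 'a::metric_space \<Rightarrow> 'a"
    and x0 :: 'a
  assumes "group G"
    and "CAT0 TYPE('a)"
    and "proper_space TYPE('a)"
    and "geometric_action G act"
    and "\<exists>\<alpha>\<in>visual_boundary TYPE('a). \<exists>\<beta>\<in>visual_boundary TYPE('a).
           \<exists>\<gamma>\<in>visual_boundary TYPE('a). \<alpha> \<noteq> \<beta> \<and> \<alpha> \<noteq> \<gamma> \<and> \<beta> \<noteq> \<gamma>"
    and "\<exists>M>0. \<forall>\<alpha>\<in>visual_boundary TYPE('a). \<forall>\<beta>\<in>visual_boundary TYPE('a). \<alpha> \<noteq> \<beta> \<longrightarrow>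
           (\<exists>(gs :: nat \<Rightarrow> 'g) y0. (\<forall>i. gs i \<in> carrier G) \<and>
              filterlim (\<lambda>i. dist y0 (act (gs i) x0)) at_top sequentially \<and>
              (\<forall>i. (\<exists>t\<ge>0. ray_to (act (gs i) x0) \<alpha> t \<in> cball y0 M) \<and>
                   (\<exists>t\<ge>0. ray_to (act (gs i) x0) \<beta> t \<in> cball y0 M)))"
  shows "scrambled_boundary G act x0"
  unfolding scrambled_boundary_def
proof (intro ballI impI conjI)
  fix \<alpha> \<beta> assume \<alpha>: "\<alpha> \<in> visual_boundary TYPE('a)" and \<beta>: "\<beta> \<in> visual_boundary TYPE('a)" and "\<alpha> \<noteq> \<beta>"
  have G: "group G" "isometric_action G act" and "cocompact_action G act"
    using assms(1,4) unfolding geometric_action_def by auto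
  then obtain D where net: "\<And>p. \<exists>g\<in>carrier G. dist p (act g x0) \<le> D"
    using cocompact_action_orbit_net by blast
  show "0 < Limsup (leaving_finite G)
      (\<lambda>g. ereal (boundary_dist x0 (boundary_act act g \<alpha>) (boundary_act act g \<beta>)))"
    using Limsup_boundary_dist_gt_0[OF assms(2,3) G net \<alpha> \<beta> \<open>\<alpha> \<noteq> \<beta>\<close>] .
  obtain M where "\<forall>\<alpha>\<in>visual_boundary TYPE('a). \<forall>\<beta>\<in>visual_boundary TYPE('a). \<alpha> \<noteq> \<beta> \<longrightarrow>
      (\<exists>(gs :: nat \<Rightarrow> 'g) y0. (\<forall>i. gs i \<in> carrier G) \<and>
         filterlim (\<lambda>i. dist y0 (act (gs i) x0)) at_top sequentially \<and>
         (\<forall>i. (\<exists>t\<ge>0. ray_to (act (gs i) x0) \<alpha> t \<in> cball y0 M) \<and>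
              (\<exists>t\<ge>0. ray_to (act (gs i) x0) \<beta> t \<in> cball y0 M)))"
    using assms(6) by blast
  from this[rule_format, OF \<alpha> \<beta> \<open>\<alpha> \<noteq> \<beta>\<close>] obtain gs y0 where
    "\<forall>i. gs i \<in> carrier G" "filterlim (\<lambda>i. dist y0 (act (gs i) x0)) at_top sequentially"
    "\<forall>i. (\<exists>t\<ge>0. ray_to (act (gs i) x0) \<alpha> t \<in> cball y0 M) \<and>
         (\<exists>t\<ge>0. ray_to (act (gs i) x0) \<beta> t \<in> cball y0 M)"
    by blast
  then show "Liminf (leaving_finite G)
      (\<lambda>g. ereal (boundary_dist x0 (boundary_act act g \<alpha>) (boundary_act act g \<beta>))) = 0"
    using Liminf_boundary_dist_eq_0[OF assms(2,3) G \<alpha> \<beta>] by blast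
qed

end
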